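(* Let $h\ge 1$, let $0<t_1<t_2<\dots<t_h$ be fixed points, let $W$ be a positive nondecreasing function with $W(t_1)\le \dots\le W(t_h)$ (all $W(t_j)>0$), and let $\xi_1,\dots,\xi_h,\zeta_1,\dots,\zeta_h$ be nonnegative integers with $\xi_j+\zeta_j\ge 1$ for every $j$. Consider the problem $$\text{maximize } \mathcal L(\mathbf p)=\prod_{j=1}^h p_j^{\xi_j}\Big(\sum_{k\ge j}\frac{p_k}{W(t_k)}\Big)^{\zeta_j}\quad\text{subject to } \sum_{j=1}^h p_j=1,\ p_j\ge 0\ (j=1,\dots,h).$$ Then this problem has a unique maximizer $\mathbf p=(p_1,\dots,p_h)$.
   Context: Here $p_j$ is the mass a discrete distribution assigns to $t_j$; $\xi_j$ and $\zeta_j$ are the numbers of uncensored and censored observations located at $t_j$, respectively. The convention $0^0=1$ is used. *)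

theory Defs
  imports Complex_Main
begin

definition feasible :: "nat \<Rightarrow> (nat \<Rightarrow> real) \<Rightarrow> bool" where
  "feasible h p \<longleftrightarrow> (\<forall>j. j \<notin> {1..h} \<longrightarrow> p j = 0) \<and> (\<forall>j\<in>{1..h}. p j \<ge> 0)
     \<and> (\<Sum>j=1..h. p j) = 1"

text \<open>The likelihood; the nat power satisfies the convention 0^0 = 1.\<close>
definition lik :: "nat \<Rightarrow> (nat \<Rightarrow> real) \<Rightarrow> (real \<Rightarrow> real) \<Rightarrow> (nat \<Rightarrow> nat) \<Rightarrow> (nat \<Rightarrow> nat)
    \<Rightarrow> (nat \<Rightarrow> real) \<Rightarrow> real" where
  "lik h t W \<xi> \<zeta> p = (\<Prod>j=1..h. p j ^ \<xi> j * (\<Sum>k=j..h. p k / W (t k)) ^ \<zeta> j)"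

end

theory Submission
  imports Defs "HOL-Analysis.Analysis"
begin

(* The likelihood depends on W and t only through the weights
   w_k = W(t_k), and only their positivity matters.  We therefore work with the likelihood for arbitrary positive
   weights w.
   Existence: the feasible set (the probability simplex on {1..h}, viewed inside
   nat => real with the product topology) is compact and the likelihood is a
   polynomial, hence continuous, so a maximizer exists; the uniform distribution
   shows that the maximum is positive.
   Uniqueness: every factor p_j^xi_j * S_j(p)^zeta_j of the likelihood, where
   S_j(p) = sum_{k>=j} p_k / w_k is linear in p, satisfies
   f(p) f(q) <= f((p+q)/2)^2 by AM-GM, strictly if xi_j >= 1 and p_j ~= q_j
   or zeta_j >= 1 and S_j(p) ~= S_j(q).  Because xi_j + zeta_j >= 1, the
   values p_j (xi_j >= 1) and S_j(p) (zeta_j >= 1) determine p by backward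
   induction on j, so two distinct feasible p, q of positive likelihood satisfy
   L(p) L(q) < L((p+q)/2)^2.  Two distinct maximizers would thus be beaten by
   their midpoint. *)

definition tail_sum :: "nat \<Rightarrow> (nat \<Rightarrow> real) \<Rightarrow> (nat \<Rightarrow> real) \<Rightarrow> nat \<Rightarrow> real"
  where "tail_sum h w p j = (\<Sum>k=j..h. p k / w k)"

definition lik_factor :: "nat \<Rightarrow> (nat \<Rightarrow> real) \<Rightarrow> (nat \<Rightarrow> nat) \<Rightarrow> (nat \<Rightarrow> nat)
    \<Rightarrow> (nat \<Rightarrow> real) \<Rightarrow> nat \<Rightarrow> real"
  where "lik_factor h w \<xi> \<zeta> p j = p j ^ \<xi> j * tail_sum h w p j ^ \<zeta> j"

definition weighted_lik :: "nat \<Rightarrow> (nat \<Rightarrow> real) \<Rightarrow> (nat \<Rightarrow> nat) \<Rightarrow> (nat \<Rightarrow> nat)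
    \<Rightarrow> (nat \<Rightarrow> real) \<Rightarrow> real"
  where "weighted_lik h w \<xi> \<zeta> p = (\<Prod>j=1..h. lik_factor h w \<xi> \<zeta> p j)"

lemma lik_eq_weighted_lik: "lik h t W \<xi> \<zeta> = weighted_lik h (\<lambda>k. W (t k)) \<xi> \<zeta>"
  by (simp add: fun_eq_iff lik_def weighted_lik_def lik_factor_def tail_sum_def)

lemma tail_sum_midpoint:
  "tail_sum h w (\<lambda>k. (p k + q k) / 2) j = (tail_sum h w p j + tail_sum h w q j) / 2"
proof -
  have "(\<Sum>k=j..h. (p k + q k) / 2 / w k) = (\<Sum>k=j..h. p k / w k / 2 + q k / w k / 2)"
    by (rule sum.cong) (auto simp: add_divide_distrib)
  then show ?thesis
    by (simp only: tail_sum_def sum.distrib sum_divide_distrib add_divide_distrib)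
qed

lemma tail_sum_nonneg:
  assumes "feasible h p" and "\<forall>k\<in>{1..h}. 0 < w k" and "1 \<le> j"
  shows "0 \<le> tail_sum h w p j"
  unfolding tail_sum_def using assms
  by (intro sum_nonneg divide_nonneg_pos) (auto simp: feasible_def)

lemma lik_factor_nonneg:
  assumes "feasible h p" and "\<forall>k\<in>{1..h}. 0 < w k" and "j \<in> {1..h}"
  shows "0 \<le> lik_factor h w \<xi> \<zeta> p j"
  using assms tail_sum_nonneg[OF assms(1,2)] by (auto simp: lik_factor_def feasible_def)

lemma lik_factor_pos:
  assumes "feasible h p" and "\<forall>k\<in>{1..h}. 0 < w k" and "j \<in> {1..h}"
    and "0 < weighted_lik h w \<xi> \<zeta> p"
  shows "0 < lik_factor h w \<xi> \<zeta> p j"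
proof -
  have "(\<Prod>i=1..h. lik_factor h w \<xi> \<zeta> p i) \<noteq> 0"
    using assms(4) unfolding weighted_lik_def by linarith
  then have "lik_factor h w \<xi> \<zeta> p j \<noteq> 0"
    using assms(3) prod_zero_iff[of "{1..h}"] by fastforce
  then show ?thesis using lik_factor_nonneg[OF assms(1-3), of \<xi> \<zeta>] by linarith
qed

lemma feasible_midpoint:
  assumes "feasible h p" and "feasible h q"
  shows "feasible h (\<lambda>k. (p k + q k) / 2)"
  using assms by (auto simp: feasible_def sum.distrib sum_divide_distrib[symmetric])

lemma feasible_uniform:
  assumes "1 \<le> h"
  shows "feasible h (\<lambda>j. if j \<in> {1..h} then 1 / real h else 0)"
  using assms by (auto simp: feasible_def)

text \<open>The feasible set is a closed subset of the compact box \<open>\<Pi>\<^sub>j [0,1]\<close> (with the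
  coordinates outside \<open>{1..h}\<close> fixed to \<open>0\<close>), hence compact.\<close>
lemma compact_feasible: "compact {p. feasible h p}"
proof -
  define box :: "(nat \<Rightarrow> real) set"
    where "box = PiE UNIV (\<lambda>j. if j \<in> {1..h} then {0..1} else {0})"
  have "feasible h p \<longleftrightarrow> p \<in> box \<inter> {p. sum p {1..h} = 1}" for p
  proof
    assume f: "feasible h p"
    have "p j \<le> sum p {1..h}" if "j \<in> {1..h}" for j
      using f that by (intro member_le_sum) (auto simp: feasible_def)
    then show "p \<in> box \<inter> {p. sum p {1..h} = 1}"
      using f by (auto simp: feasible_def PiE_iff box_def)
  qed (auto simp: feasible_def PiE_iff box_def split: if_splits)
  then have eq: "{p. feasible h p} = box \<inter> {p. sum p {1..h} = 1}" by blast
  have "compactin (product_topology (\<lambda>i. euclidean) UNIV) box"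
    unfolding box_def by (subst compactin_PiE) auto
  then have "compact box" by (simp add: euclidean_product_topology)
  moreover have "closed {p::nat \<Rightarrow> real. sum p {1..h} = 1}"
    by (intro closed_Collect_eq continuous_on_sum continuous_on_const) auto
  ultimately show ?thesis unfolding eq by (rule compact_Int_closed)
qed

section \<open>Existence of a maximizer\<close>

text \<open>The likelihood is a polynomial in the coordinates, hence attains its supremum
  on the compact feasible set.\<close>
lemma weighted_lik_has_maximizer:
  assumes "1 \<le> h"
  shows "\<exists>p. feasible h p \<and>
    (\<forall>q. feasible h q \<longrightarrow> weighted_lik h w \<xi> \<zeta> q \<le> weighted_lik h w \<xi> \<zeta> p)"
proof -
  have "continuous_on {p. feasible h p} (weighted_lik h w \<xi> \<zeta>)"
    unfolding weighted_lik_def lik_factor_def tail_sum_def divide_inverse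
    by (intro continuous_intros continuous_on_product_coordinates[THEN continuous_on_subset]) auto
  moreover have "{p. feasible h p} \<noteq> {}" using feasible_uniform[OF assms] by blast
  ultimately show ?thesis using continuous_attains_sup[OF compact_feasible] by blast
qed

lemma weighted_lik_uniform_pos:
  assumes "1 \<le> h" and "\<forall>k\<in>{1..h}. 0 < w k"
  shows "0 < weighted_lik h w \<xi> \<zeta> (\<lambda>j. if j \<in> {1..h} then 1 / real h else 0)"
  unfolding weighted_lik_def lik_factor_def tail_sum_def
proof (intro prod_pos mult_pos_pos zero_less_power)
  fix j assume j: "j \<in> {1..h}"
  then show "0 < (if j \<in> {1..h} then 1 / real h else 0)" by simp
  show "0 < (\<Sum>k=j..h. (if k \<in> {1..h} then 1 / real h else 0) / w k)"
    using j assms(2) by (intro sum_pos) auto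
qed

section \<open>Identifiability\<close>

text \<open>Since every \<open>t\<^sub>j\<close> carries an observation, a distribution is determined by its masses
  at the uncensored points together with its tail sums at the censored points:
  going down from \<open>j = h\<close>, \<open>p\<^sub>j\<close> is either observed directly or recovered from
  \<open>S\<^sub>j(p) = p\<^sub>j / w\<^sub>j + S\<^sub>j\<^sub>+\<^sub>1(p)\<close>.\<close>
lemma eq_from_observed:
  fixes \<xi> \<zeta> :: "nat \<Rightarrow> nat"
  assumes w_pos: "\<forall>k\<in>{1..h}. 0 < w k"
    and obs: "\<forall>j\<in>{1..h}. 1 \<le> \<xi> j + \<zeta> j"
    and uncens: "\<And>j. j \<in> {1..h} \<Longrightarrow> 1 \<le> \<xi> j \<Longrightarrow> p j = q j"
    and cens: "\<And>j. j \<in> {1..h} \<Longrightarrow> 1 \<le> \<zeta> j \<Longrightarrow> tail_sum h w p j = tail_sum h w q j"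
    and k: "k \<in> {1..h}"
  shows "p k = q k"
  using k
proof (induction "h - k" arbitrary: k rule: less_induct)
  case less
  show ?case
  proof (cases "1 \<le> \<xi> k")
    case True
    then show ?thesis using uncens less.prems by blast
  next
    case False
    then have "1 \<le> \<zeta> k" using obs less.prems by fastforce
    then have "tail_sum h w p k = tail_sum h w q k" using cens less.prems by blast
    moreover have "(\<Sum>i=Suc k..h. p i / w i) = (\<Sum>i=Suc k..h. q i / w i)"
      using less by (intro sum.cong) auto
    moreover have "tail_sum h w r k = r k / w k + (\<Sum>i=Suc k..h. r i / w i)" for r
      using less.prems by (simp add: tail_sum_def sum.atLeast_Suc_atMost)
    ultimately have "p k / w k = q k / w k" by simp
    moreover have "0 < w k" using w_pos less.prems by blast
    ultimately show ?thesis by simp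
  qed
qed

section \<open>Strict log-concavity along midpoints\<close>

lemma power_mult_le_midpoint:
  fixes x y :: real
  assumes "0 \<le> x" and "0 \<le> y"
  shows "x ^ n * y ^ n \<le> (((x + y) / 2) ^ n)\<^sup>2"
proof -
  have "x * y \<le> ((x + y) / 2)\<^sup>2"
    using zero_le_power2[of "x - y"] by (simp add: power2_eq_square field_simps)
  then have "(x * y) ^ n \<le> (((x + y) / 2)\<^sup>2) ^ n"
    using assms by (intro power_mono) simp_all
  then show ?thesis by (simp add: power_mult_distrib power_mult[symmetric] mult.commute)
qed

lemma power_mult_less_midpoint:
  fixes x y :: real
  assumes "0 \<le> x" and "0 \<le> y" and "x \<noteq> y" and "1 \<le> n"
  shows "x ^ n * y ^ n < (((x + y) / 2) ^ n)\<^sup>2"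
proof -
  have "0 < (x - y)\<^sup>2" using assms(3) by simp
  then have "x * y < ((x + y) / 2)\<^sup>2" by (simp add: power2_eq_square field_simps)
  then have "(x * y) ^ n < (((x + y) / 2)\<^sup>2) ^ n"
    using assms by (intro power_strict_mono) simp_all
  then show ?thesis by (simp add: power_mult_distrib power_mult[symmetric] mult.commute)
qed

lemma mult_less_mult_if_one_strict:
  fixes a b A B :: real
  assumes "0 \<le> a" "0 \<le> b" "a \<le> A" "b \<le> B" "0 < a * b" "a < A \<or> b < B"
  shows "a * b < A * B"
proof -
  have "0 < a" "0 < b" using assms(1,2,5) by (auto simp: zero_less_mult_iff)
  from assms(6) show ?thesis
  proof
    assume "a < A"
    then have "a * b < A * b" using \<open>0 < b\<close> by simp
    also have "\<dots> \<le> A * B" using assms(3,4) \<open>0 < a\<close> by (simp add: mult_left_mono)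
    finally show ?thesis .
  next
    assume "b < B"
    then have "a * b < a * B" using \<open>0 < a\<close> by simp
    also have "\<dots> \<le> A * B" using assms(3,4) \<open>0 < b\<close> by (simp add: mult_right_mono)
    finally show ?thesis .
  qed
qed

lemma lik_factor_midpoint:
  fixes \<xi> \<zeta> :: "nat \<Rightarrow> nat"
  assumes w_pos: "\<forall>k\<in>{1..h}. 0 < w k"
    and p: "feasible h p" and q: "feasible h q" and j: "j \<in> {1..h}"
  defines "f \<equiv> lik_factor h w \<xi> \<zeta>" and "m \<equiv> (\<lambda>k. (p k + q k) / 2)"
  shows "f p j * f q j \<le> (f m j)\<^sup>2"
    and "0 < f p j * f q j \<Longrightarrow>
      (1 \<le> \<xi> j \<and> p j \<noteq> q j) \<or> (1 \<le> \<zeta> j \<and> tail_sum h w p j \<noteq> tail_sum h w q j) \<Longrightarrow>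
      f p j * f q j < (f m j)\<^sup>2"
proof -
  define a where "a = p j ^ \<xi> j * q j ^ \<xi> j"
  define b where "b = tail_sum h w p j ^ \<zeta> j * tail_sum h w q j ^ \<zeta> j"
  have pj: "0 \<le> p j" and qj: "0 \<le> q j" using p q j by (auto simp: feasible_def)
  have Sp: "0 \<le> tail_sum h w p j" and Sq: "0 \<le> tail_sum h w q j"
    using tail_sum_nonneg[OF p w_pos] tail_sum_nonneg[OF q w_pos] j by auto
  have split: "f p j * f q j = a * b" by (simp add: f_def lik_factor_def a_def b_def algebra_simps)
  have m_split: "(f m j)\<^sup>2 = (m j ^ \<xi> j)\<^sup>2 * (tail_sum h w m j ^ \<zeta> j)\<^sup>2"
    by (simp add: f_def lik_factor_def power_mult_distrib)
  have a_le: "a \<le> (m j ^ \<xi> j)\<^sup>2"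
    unfolding a_def m_def using pj qj by (rule power_mult_le_midpoint)
  have b_le: "b \<le> (tail_sum h w m j ^ \<zeta> j)\<^sup>2"
    unfolding b_def m_def tail_sum_midpoint using Sp Sq by (rule power_mult_le_midpoint)
  have a_nn: "0 \<le> a" and b_nn: "0 \<le> b" using pj qj Sp Sq by (simp_all add: a_def b_def)
  show "f p j * f q j \<le> (f m j)\<^sup>2"
    unfolding split m_split using a_le b_le a_nn b_nn by (intro mult_mono) auto
  assume pos: "0 < f p j * f q j"
    and differ: "(1 \<le> \<xi> j \<and> p j \<noteq> q j) \<or> (1 \<le> \<zeta> j \<and> tail_sum h w p j \<noteq> tail_sum h w q j)"
  from differ have strict: "a < (m j ^ \<xi> j)\<^sup>2 \<or> b < (tail_sum h w m j ^ \<zeta> j)\<^sup>2"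
  proof
    assume "1 \<le> \<xi> j \<and> p j \<noteq> q j"
    then have "a < (m j ^ \<xi> j)\<^sup>2"
      unfolding a_def m_def using pj qj by (intro power_mult_less_midpoint) auto
    then show ?thesis ..
  next
    assume "1 \<le> \<zeta> j \<and> tail_sum h w p j \<noteq> tail_sum h w q j"
    then have "b < (tail_sum h w m j ^ \<zeta> j)\<^sup>2"
      unfolding b_def m_def tail_sum_midpoint using Sp Sq by (intro power_mult_less_midpoint) auto
    then show ?thesis ..
  qed
  have "0 < a * b" using pos by (simp only: split)
  then show "f p j * f q j < (f m j)\<^sup>2"
    unfolding split m_split by (rule mult_less_mult_if_one_strict[OF a_nn b_nn a_le b_le _ strict])
qed

lemma weighted_lik_midpoint_strict:
  fixes \<xi> \<zeta> :: "nat \<Rightarrow> nat"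
  assumes w_pos: "\<forall>k\<in>{1..h}. 0 < w k"
    and obs: "\<forall>j\<in>{1..h}. 1 \<le> \<xi> j + \<zeta> j"
    and p: "feasible h p" and q: "feasible h q" and "p \<noteq> q"
    and Lp: "0 < weighted_lik h w \<xi> \<zeta> p" and Lq: "0 < weighted_lik h w \<xi> \<zeta> q"
  defines "L \<equiv> weighted_lik h w \<xi> \<zeta>" and "f \<equiv> lik_factor h w \<xi> \<zeta>"
  shows "L p * L q < (L (\<lambda>k. (p k + q k) / 2))\<^sup>2"
proof -
  define m where "m = (\<lambda>k. (p k + q k) / 2)"
  have pos: "0 < f p i * f q i" if "i \<in> {1..h}" for i
    using lik_factor_pos[OF p w_pos that Lp] lik_factor_pos[OF q w_pos that Lq]
    by (simp add: f_def)
  have le: "f p i * f q i \<le> (f m i)\<^sup>2" if "i \<in> {1..h}" for i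
    using lik_factor_midpoint(1)[OF w_pos p q that] by (simp add: f_def m_def)
  obtain k where pq_k: "p k \<noteq> q k" using \<open>p \<noteq> q\<close> by (meson ext)
  have k: "k \<in> {1..h}"
  proof (rule ccontr)
    assume "k \<notin> {1..h}"
    then have "p k = 0" and "q k = 0" using p q by (simp_all add: feasible_def)
    with pq_k show False by simp
  qed
  have "\<exists>j\<in>{1..h}. (1 \<le> \<xi> j \<and> p j \<noteq> q j) \<or> (1 \<le> \<zeta> j \<and> tail_sum h w p j \<noteq> tail_sum h w q j)"
  proof (rule ccontr)
    assume no_witness: "\<not> ?thesis"
    have "p k = q k" by (rule eq_from_observed[OF w_pos obs _ _ k]) (use no_witness in blast)+
    with pq_k show False ..
  qed
  then obtain j where j: "j \<in> {1..h}"
    and differ: "(1 \<le> \<xi> j \<and> p j \<noteq> q j) \<or> (1 \<le> \<zeta> j \<and> tail_sum h w p j \<noteq> tail_sum h w q j)"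
    by blast
  have "L p * L q = (\<Prod>i=1..h. f p i * f q i)"
    by (simp add: L_def f_def weighted_lik_def prod.distrib)
  also have "\<dots> < (\<Prod>i=1..h. (f m i)\<^sup>2)"
  proof (rule prod_mono_strict[OF j])
    show "f p j * f q j < (f m j)\<^sup>2"
      using lik_factor_midpoint(2)[OF w_pos p q j] pos[OF j] differ unfolding f_def m_def by blast
    fix i assume i: "i \<in> {1..h}"
    show "0 \<le> f p i * f q i \<and> f p i * f q i \<le> (f m i)\<^sup>2" using pos[OF i] le[OF i] by simp
    show "0 < (f m i)\<^sup>2" using pos[OF i] le[OF i] by linarith
  qed simp
  also have "\<dots> = (L m)\<^sup>2"
    by (simp add: L_def f_def weighted_lik_def prod_power_distrib)
  finally show ?thesis unfolding m_def .
qed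

lemma weighted_lik_maximizer_unique:
  fixes \<xi> \<zeta> :: "nat \<Rightarrow> nat"
  assumes w_pos: "\<forall>k\<in>{1..h}. 0 < w k"
    and obs: "\<forall>j\<in>{1..h}. 1 \<le> \<xi> j + \<zeta> j"
    and p: "feasible h p" and q: "feasible h q"
    and p_max: "\<And>r. feasible h r \<Longrightarrow> weighted_lik h w \<xi> \<zeta> r \<le> weighted_lik h w \<xi> \<zeta> p"
    and q_max: "\<And>r. feasible h r \<Longrightarrow> weighted_lik h w \<xi> \<zeta> r \<le> weighted_lik h w \<xi> \<zeta> q"
    and Lp: "0 < weighted_lik h w \<xi> \<zeta> p"
  shows "q = p"
proof (rule ccontr)
  assume "q \<noteq> p"
  define L where "L = weighted_lik h w \<xi> \<zeta>"
  define m where "m = (\<lambda>k. (q k + p k) / 2)"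
  have fm: "feasible h m" unfolding m_def using q p by (rule feasible_midpoint)
  have same: "L q = L p" using p_max[OF q] q_max[OF p] by (simp add: L_def)
  have "L q * L p < (L m)\<^sup>2"
    using weighted_lik_midpoint_strict[OF w_pos obs q p \<open>q \<noteq> p\<close>] Lp same
    by (simp add: L_def m_def)
  moreover have "(L m)\<^sup>2 \<le> L q * L p"
  proof -
    have "0 \<le> L m"
      unfolding L_def weighted_lik_def using lik_factor_nonneg[OF fm w_pos] by (intro prod_nonneg)
    moreover have "L m \<le> L p" using p_max[OF fm] by (simp add: L_def)
    ultimately have "(L m)\<^sup>2 \<le> (L p)\<^sup>2" by (intro power_mono)
    then show ?thesis using same by (simp add: power2_eq_square)
  qed
  ultimately show False by linarith
qed

lemma t_pos:
  assumes "0 < t 1" and "\<And>j. 1 \<le> j \<Longrightarrow> j < h \<Longrightarrow> t j < t (Suc j)" and "k \<in> {1..h}"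
  shows "(0::real) < t k"
  using assms(3)
proof (induction k)
  case (Suc k)
  show ?case
  proof (cases "k = 0")
    case False
    then have "0 < t k" and "t k < t (Suc k)" using Suc assms(2) by auto
    then show ?thesis by linarith
  qed (use assms(1) in simp)
qed simp

theorem mainTheorem1:
  fixes h :: nat and t :: "nat \<Rightarrow> real" and W :: "real \<Rightarrow> real"
    and \<xi> \<zeta> :: "nat \<Rightarrow> nat"
  assumes "h \<ge> 1"
    and "0 < t 1"
    and "\<And>j. 1 \<le> j \<Longrightarrow> j < h \<Longrightarrow> t j < t (Suc j)"
    and "\<And>x. 0 < x \<Longrightarrow> 0 < W x"
    and "mono_on {0<..} W"
    and "\<And>j. j \<in> {1..h} \<Longrightarrow> \<xi> j + \<zeta> j \<ge> 1"
  shows "\<exists>!p. feasible h p \<and> (\<forall>q. feasible h q \<longrightarrow> lik h t W \<xi> \<zeta> q \<le> lik h t W \<xi> \<zeta> p)"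
proof -
  define w where "w = (\<lambda>k. W (t k))"
  have w_pos: "\<forall>k\<in>{1..h}. 0 < w k"
    using t_pos[OF assms(2,3)] assms(4) unfolding w_def by blast
  have obs: "\<forall>j\<in>{1..h}. 1 \<le> \<xi> j + \<zeta> j" using assms(6) by blast
  obtain p where p: "feasible h p"
    and p_max: "\<And>q. feasible h q \<Longrightarrow> weighted_lik h w \<xi> \<zeta> q \<le> weighted_lik h w \<xi> \<zeta> p"
    using weighted_lik_has_maximizer[OF assms(1)] by blast
  have p_pos: "0 < weighted_lik h w \<xi> \<zeta> p"
    using weighted_lik_uniform_pos[OF assms(1) w_pos, of \<xi> \<zeta>] p_max[OF feasible_uniform[OF assms(1)]]
    by linarith
  have "\<exists>!p. feasible h p \<and> (\<forall>q. feasible h q \<longrightarrow> weighted_lik h w \<xi> \<zeta> q \<le> weighted_lik h w \<xi> \<zeta> p)"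
  proof (rule ex1I[of _ p])
    fix p' assume "feasible h p' \<and> (\<forall>q. feasible h q \<longrightarrow> weighted_lik h w \<xi> \<zeta> q \<le> weighted_lik h w \<xi> \<zeta> p')"
    then show "p' = p" using weighted_lik_maximizer_unique[OF w_pos obs p _ p_max _ p_pos] by blast
  qed (use p p_max in blast)
  then show ?thesis by (simp add: w_def lik_eq_weighted_lik)
qed

end
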